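(* Let $F_1$ and $F_2$ be two rooted general $X$-forests, and let $S$ be a maximal sibling set of $F_2$ such that all labels in $S$ are siblings in $F_1$. For any maximal agreement forest $F$ for $F_1$ and $F_2$, if two labels in $S$ are siblings in $F$, then all labels in $S$ form a maximal sibling set in $F$.
   Context: Let $X$ be a finite label set containing $\rho$. A rooted general $X$-forest is a subgraph of a tree whose leaves are bijectively labeled by $X$, whose unlabeled vertices have degree at least 3, and whose leaf $\rho$ is the root; each component contains a leaf, the component label sets partition $X$, and each component is rooted at $\rho$ if it contains it, otherwise at the lowest common ancestor (in the underlying tree) of its labeled leaves. Forests are taken up to forced contraction (non-root unlabeled degree-2 vertices suppressed, unlabeled vertices of degree $<2$ deleted). $\mathrm{Ord}(F)$ is the number of components; $F'$ is a subforest of $F$ if, up to forced contraction, it is isomorphic (preserving labels and roots) to $F$ with some edges deleted; an agreement forest for $F_1,F_2$ is an $X$-forest that is a subforest of both; it is a maximal agreement forest if no agreement forest $F'$ for $F_1,F_2$ contains it as a subforest with $\mathrm{Ord}(F')<\mathrm{Ord}(F)$. Two leaves are siblings if they have a common parent; a sibling set is a set of leaves that are pairwise siblings; a maximal sibling set is a sibling set $S$ whose common parent $p$ has degree $|S|$ if $p$ has no parent, or $|S|+1$ if $p$ has a parent. *)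

theory Defs
  imports Main
begin

text \<open>
A rooted general X-forest, taken up to forced
contraction and isomorphism preserving labels and roots, is represented by its
set of vertex clusters: each vertex v is represented by the set of labels of the
leaves that are descendants of v (v included) in its component, oriented away
from the component root.  The leaf x (x different from rho) is the cluster {x};
the root leaf rho is the cluster of all labels of its component.
\<close>

definition laminar :: "'a set set \<Rightarrow> bool" where
  "laminar F \<longleftrightarrow> (\<forall>A\<in>F. \<forall>B\<in>F. A \<inter> B = {} \<or> A \<subseteq> B \<or> B \<subseteq> A)"

definition is_forest :: "'a set \<Rightarrow> 'a \<Rightarrow> 'a set set \<Rightarrow> bool" where
  "is_forest X rho F \<longleftrightarrow>
     F \<subseteq> Pow X \<and> {} \<notin> F \<and> laminar F \<and>
     (\<forall>x\<in>X - {rho}. {x} \<in> F) \<and>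
     (\<exists>!C. C \<in> F \<and> rho \<in> C) \<and>
     (\<forall>C\<in>F. rho \<in> C \<and> C \<noteq> {rho} \<longrightarrow> C - {rho} \<in> F)"

definition is_parent :: "'a set set \<Rightarrow> 'a set \<Rightarrow> 'a set \<Rightarrow> bool" where
  "is_parent F C D \<longleftrightarrow> C \<in> F \<and> D \<in> F \<and> C \<subset> D \<and> \<not> (\<exists>E\<in>F. C \<subset> E \<and> E \<subset> D)"

definition has_parent :: "'a set set \<Rightarrow> 'a set \<Rightarrow> bool" where
  "has_parent F C \<longleftrightarrow> (\<exists>D. is_parent F C D)"

definition children :: "'a set set \<Rightarrow> 'a set \<Rightarrow> 'a set set" where
  "children F P = {C. is_parent F C P}"

definition degree :: "'a set set \<Rightarrow> 'a set \<Rightarrow> nat" where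
  "degree F P = card (children F P) + (if has_parent F P then 1 else 0)"

definition leafv :: "'a set set \<Rightarrow> 'a \<Rightarrow> 'a set \<Rightarrow> bool" where
  "leafv F x C \<longleftrightarrow> C \<in> F \<and> x \<in> C \<and> (\<forall>D\<in>F. x \<in> D \<longrightarrow> C \<subseteq> D)"

definition leaf_parent :: "'a set set \<Rightarrow> 'a \<Rightarrow> 'a set \<Rightarrow> bool" where
  "leaf_parent F x P \<longleftrightarrow> (\<exists>C. leafv F x C \<and> is_parent F C P)"

definition siblings :: "'a set set \<Rightarrow> 'a \<Rightarrow> 'a \<Rightarrow> bool" where
  "siblings F a b \<longleftrightarrow> (\<exists>P. leaf_parent F a P \<and> leaf_parent F b P)"

definition sibling_set :: "'a set set \<Rightarrow> 'a set \<Rightarrow> bool" where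
  "sibling_set F S \<longleftrightarrow> (\<forall>a\<in>S. \<forall>b\<in>S. a \<noteq> b \<longrightarrow> siblings F a b)"

definition max_sibling_set :: "'a set set \<Rightarrow> 'a set \<Rightarrow> bool" where
  "max_sibling_set F S \<longleftrightarrow> sibling_set F S \<and> S \<noteq> {} \<and>
     (\<exists>P. (\<forall>a\<in>S. leaf_parent F a P) \<and>
          degree F P = (if has_parent F P then card S + 1 else card S))"

definition edges :: "'a set set \<Rightarrow> ('a set \<times> 'a set) set" where
  "edges F = {(C, D). is_parent F C D}"

definition cluster_after :: "'a set set \<Rightarrow> ('a set \<times> 'a set) set \<Rightarrow> 'a set \<Rightarrow> 'a set" where
  "cluster_after F K V = {x. \<exists>C. leafv F x C \<and> (C, V) \<in> K\<^sup>*}"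

text \<open>The forest obtained from F by deleting all edges not in K, followed by forced
contraction (vertices with empty cluster disappear, suppressed vertices merge).\<close>
definition delete_edges :: "'a set set \<Rightarrow> ('a set \<times> 'a set) set \<Rightarrow> 'a set set" where
  "delete_edges F K = (cluster_after F K ` F) - {{}}"

definition subforest :: "'a set set \<Rightarrow> 'a set set \<Rightarrow> bool" where
  "subforest F' F \<longleftrightarrow> (\<exists>K \<subseteq> edges F. F' = delete_edges F K)"

definition components :: "'a set set \<Rightarrow> 'a set set" where
  "components F = {C \<in> F. \<not> (\<exists>D\<in>F. C \<subset> D)}"

definition Ord :: "'a set set \<Rightarrow> nat" where
  "Ord F = card (components F)"

definition agreement_forest :: "'a set \<Rightarrow> 'a \<Rightarrow> 'a set set \<Rightarrow> 'a set set \<Rightarrow> 'a set set \<Rightarrow> bool" where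
  "agreement_forest X rho F1 F2 F \<longleftrightarrow> is_forest X rho F \<and> subforest F F1 \<and> subforest F F2"

definition maximal_agreement_forest :: "'a set \<Rightarrow> 'a \<Rightarrow> 'a set set \<Rightarrow> 'a set set \<Rightarrow> 'a set set \<Rightarrow> bool" where
  "maximal_agreement_forest X rho F1 F2 F \<longleftrightarrow> agreement_forest X rho F1 F2 F \<and>
     \<not> (\<exists>F'. agreement_forest X rho F1 F2 F' \<and> subforest F F' \<and> Ord F' < Ord F)"

end

theory Submission
  imports Defs
begin

text \<open>
  Let a, b \<in> S be siblings in F with common parent P. In F1 and in F2 all of S hang below
  a single vertex (q1, resp. q2), and since F arises from either forest by deleting edges, P is
  what survives of that vertex: a leaf c \<in> S lies in P exactly when its edge to the vertex was
  kept. If some c \<in> S were missing from P, that edge was cut in both forests, so {c} is an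
  isolated component of F. Regrafting c as a child of P then gives an agreement forest that
  has F as a subforest and one component fewer, contradicting maximality. Hence S \<subseteq> P.
  Conversely every label of P lies below a child of q2, and these children are exactly the
  leaves of S because S is a maximal sibling set of F2. So the children of P in F are exactly
  the leaves of S.
\<close>

lemma is_forestD:
  assumes "is_forest X rho H"
  shows "H \<subseteq> Pow X" "{} \<notin> H" "laminar H" "\<And>x. x \<in> X \<Longrightarrow> x \<noteq> rho \<Longrightarrow> {x} \<in> H"
    "\<exists>!C. C \<in> H \<and> rho \<in> C" "\<And>C. C \<in> H \<Longrightarrow> rho \<in> C \<Longrightarrow> C \<noteq> {rho} \<Longrightarrow> C - {rho} \<in> H"
  using assms unfolding is_forest_def by simp_all

lemma root_cluster_unique:
  assumes "is_forest X rho H" "C \<in> H" "D \<in> H" "rho \<in> C" "rho \<in> D"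
  shows "C = D"
  using is_forestD(5)[OF assms(1)] assms(2-5) by blast

lemma finite_forest:
  assumes "is_forest X rho H" "finite X"
  shows "finite H" "\<And>C. C \<in> H \<Longrightarrow> finite C"
proof -
  have "finite (Pow X)" using assms(2) by simp
  then show "finite H" using is_forestD(1)[OF assms(1)] by (rule finite_subset[rotated])
  show "finite C" if "C \<in> H" for C
    using that is_forestD(1)[OF assms(1)] assms(2) finite_subset by blast
qed

lemma is_parent_unique:
  assumes "laminar H" "{} \<notin> H" "is_parent H C D1" "is_parent H C D2"
  shows "D1 = D2"
proof -
  have D: "C \<in> H" "D1 \<in> H" "D2 \<in> H" "C \<subset> D1" "C \<subset> D2"
    and no_between: "\<not> (\<exists>E\<in>H. C \<subset> E \<and> E \<subset> D1)" "\<not> (\<exists>E\<in>H. C \<subset> E \<and> E \<subset> D2)"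
    using assms(3,4) unfolding is_parent_def by blast+
  have "C \<noteq> {}" using D(1) assms(2) by blast
  then have "D1 \<inter> D2 \<noteq> {}" using D(4,5) by blast
  then have "D1 \<subseteq> D2 \<or> D2 \<subseteq> D1" using assms(1) D(2,3) unfolding laminar_def by blast
  then show ?thesis using D no_between by blast
qed

lemma leafv_singleton:
  assumes "is_forest X rho H" "x \<in> X" "x \<noteq> rho"
  shows "leafv H x {x}"
  using is_forestD(4)[OF assms] unfolding leafv_def by blast

lemma leafv_unique: "leafv H x C \<Longrightarrow> leafv H x D \<Longrightarrow> C = D"
  unfolding leafv_def by blast

lemma leafv_exists:
  assumes "is_forest X rho H" "x \<in> X"
  obtains C where "leafv H x C"
proof (cases "x = rho")
  case True
  obtain C where "C \<in> H" "rho \<in> C" using is_forestD(5)[OF assms(1)] by blast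
  then have "leafv H x C" using root_cluster_unique[OF assms(1)] True unfolding leafv_def by blast
  then show ?thesis by (rule that)
next
  case False
  then show ?thesis using that leafv_singleton[OF assms] by blast
qed

lemma is_parent_singleton_label:
  assumes "is_forest X rho H" "is_parent H {s} P"
  shows "s \<in> X" "s \<noteq> rho"
proof -
  have "{s} \<in> H" "P \<in> H" "{s} \<subset> P" using assms(2) unfolding is_parent_def by auto
  then show "s \<in> X" "s \<noteq> rho"
    using is_forestD(1)[OF assms(1)] root_cluster_unique[OF assms(1) \<open>{s} \<in> H\<close> \<open>P \<in> H\<close>] by blast+
qed

lemma leaf_parent_iff_is_parent:
  assumes "is_forest X rho H"
  shows "leaf_parent H s P \<longleftrightarrow> is_parent H {s} P"
proof
  assume "leaf_parent H s P"
  then obtain C where C: "leafv H s C" "is_parent H C P" unfolding leaf_parent_def by blast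
  have "C \<in> H" "s \<in> C" "P \<in> H" "C \<subset> P" using C unfolding leafv_def is_parent_def by auto
  then have "s \<in> X" "s \<noteq> rho"
    using is_forestD(1)[OF assms] root_cluster_unique[OF assms \<open>C \<in> H\<close> \<open>P \<in> H\<close>] by blast+
  then have "C = {s}" using leafv_unique[OF C(1) leafv_singleton[OF assms]] by blast
  then show "is_parent H {s} P" using C(2) by simp
next
  assume "is_parent H {s} P"
  then show "leaf_parent H s P"
    using leafv_singleton[OF assms is_parent_singleton_label[OF assms]] unfolding leaf_parent_def by blast
qed

lemma singleton_psubset: "a \<in> A \<Longrightarrow> b \<in> A \<Longrightarrow> a \<noteq> b \<Longrightarrow> {a} \<subset> A"
  by blast

lemma parent_of_two_leaves_excludes_root:
  assumes "is_forest X rho H" "is_parent H {a} P" "is_parent H {b} P" "a \<noteq> b"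
  shows "rho \<notin> P"
proof
  assume "rho \<in> P"
  have "a \<noteq> rho" "b \<noteq> rho"
    using is_parent_singleton_label(2)[OF assms(1)] assms(2,3) by blast+
  have "P \<in> H" "a \<in> P" "b \<in> P" using assms(2,3) unfolding is_parent_def by auto
  have "P - {rho} \<in> H"
    using is_forestD(6)[OF assms(1) \<open>P \<in> H\<close> \<open>rho \<in> P\<close>] \<open>b \<in> P\<close> \<open>b \<noteq> rho\<close> by blast
  moreover have "{a} \<subset> P - {rho}"
    using singleton_psubset[of a "P - {rho}" b] \<open>a \<in> P\<close> \<open>b \<in> P\<close> \<open>a \<noteq> rho\<close> \<open>b \<noteq> rho\<close> assms(4)
    by simp
  moreover have "P - {rho} \<subset> P" using \<open>rho \<in> P\<close> by blast
  ultimately show False using assms(2) unfolding is_parent_def by blast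
qed

lemma edges_path_subset:
  assumes "K \<subseteq> edges H" "(A, B) \<in> K\<^sup>*"
  shows "A \<subseteq> B"
  using assms(2) by induction (use assms(1) in \<open>auto simp: edges_def is_parent_def\<close>)

lemma edges_path_first_step:
  assumes "laminar H" "{} \<notin> H" "K \<subseteq> edges H" "(C, V) \<in> K\<^sup>*" "C \<noteq> V" "is_parent H C D"
  shows "(C, D) \<in> K" "(D, V) \<in> K\<^sup>*"
proof -
  obtain E where E: "(C, E) \<in> K" "(E, V) \<in> K\<^sup>*" using assms(4,5) by (metis converse_rtranclE)
  then have "E = D" using assms(3,6) is_parent_unique[OF assms(1,2)] unfolding edges_def by blast
  then show "(C, D) \<in> K" "(D, V) \<in> K\<^sup>*" using E by simp_all
qed

lemma edges_path_of_subset: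
  assumes "finite H" "\<And>E. E \<in> H \<Longrightarrow> finite E" "C \<in> H" "V \<in> H" "C \<subseteq> V"
  shows "(C, V) \<in> (edges H)\<^sup>*"
  using assms(3,5)
proof (induction "card (V - C)" arbitrary: C rule: less_induct)
  case less
  show ?case
  proof (cases "C = V")
    case False
    define M where "M = {E \<in> H. C \<subset> E \<and> E \<subseteq> V}"
    have "finite M" "V \<in> M" using assms(1,4) less.prems False unfolding M_def by auto
    then obtain D where D: "D \<in> M" "\<And>E. E \<in> M \<Longrightarrow> E \<subseteq> D \<Longrightarrow> D = E"
      using finite_has_minimal[of M] by blast
    moreover have "\<not> (\<exists>E\<in>H. C \<subset> E \<and> E \<subset> D)"
      using D unfolding M_def by blast
    ultimately have "is_parent H C D"
      using less.prems(1) unfolding is_parent_def M_def by blast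
    moreover have "card (V - D) < card (V - C)"
      using D(1) assms(2,4) unfolding M_def by (intro psubset_card_mono) auto
    then have "(D, V) \<in> (edges H)\<^sup>*" using less.hyps D(1) unfolding M_def by blast
    ultimately show ?thesis unfolding edges_def by (auto intro: converse_rtrancl_into_rtrancl)
  qed simp
qed

lemma edges_path_containing:
  assumes "(C, V) \<in> (edges H)\<^sup>*" "x \<in> C"
  shows "(C, V) \<in> {(D, E) \<in> edges H. x \<in> D}\<^sup>*"
  using assms(1)
proof induction
  case (step D E)
  have "C \<subseteq> D" using edges_path_subset[OF _ step.IH] by blast
  then show ?case using step assms(2) by (auto intro: rtrancl_into_rtrancl)
qed simp

lemma mem_cluster_after_iff:
  assumes "is_forest X rho G" "x \<in> X" "x \<noteq> rho"
  shows "x \<in> cluster_after G K V \<longleftrightarrow> ({x}, V) \<in> K\<^sup>*"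
proof -
  have "leafv G x C \<longleftrightarrow> C = {x}" for C
    using leafv_unique leafv_singleton[OF assms] by metis
  then show ?thesis unfolding cluster_after_def by simp
qed

lemma cluster_after_mono: "(V, W) \<in> K\<^sup>* \<Longrightarrow> cluster_after G K V \<subseteq> cluster_after G K W"
  unfolding cluster_after_def by (auto intro: rtrancl_trans)

lemma cluster_after_subset: "K \<subseteq> edges G \<Longrightarrow> cluster_after G K V \<subseteq> V"
  unfolding cluster_after_def leafv_def by (auto dest: edges_path_subset)

lemma cluster_after_insert:
  "cluster_after G (insert (C, q) K) V =
     cluster_after G K V \<union> (if (q, V) \<in> K\<^sup>* then cluster_after G K C else {})"
  unfolding cluster_after_def rtrancl_insert by auto

lemma children_eq_singletons:
  assumes "{} \<notin> H" and leaves: "\<And>s. s \<in> P \<Longrightarrow> is_parent H {s} P"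
  shows "children H P = (\<lambda>s. {s}) ` P"
proof (intro set_eqI iffI)
  fix C assume "C \<in> children H P"
  then have C: "C \<in> H" "C \<subset> P" unfolding children_def is_parent_def by simp_all
  then obtain x where "x \<in> C" using assms(1) by (metis all_not_in_conv)
  then have "x \<in> P" using C(2) by blast
  then have "\<not> {x} \<subset> C" using leaves C unfolding is_parent_def by metis
  then have "C = {x}" using \<open>x \<in> C\<close> by auto
  then show "C \<in> (\<lambda>s. {s}) ` P" using \<open>x \<in> P\<close> by simp
next
  fix C assume "C \<in> (\<lambda>s. {s}) ` P"
  then show "C \<in> children H P" using leaves unfolding children_def by auto
qed

lemma max_sibling_setI:
  assumes H: "is_forest X rho H" and "S \<noteq> {}" and S_P: "\<And>s. s \<in> S \<Longrightarrow> is_parent H {s} P"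
    and children: "children H P = (\<lambda>s. {s}) ` S"
  shows "max_sibling_set H S"
proof -
  have leaf_parents: "\<forall>s\<in>S. leaf_parent H s P" using S_P leaf_parent_iff_is_parent[OF H] by blast
  then have "sibling_set H S" unfolding sibling_set_def siblings_def by blast
  moreover have "card (children H P) = card S" unfolding children by (simp add: card_image)
  ultimately show ?thesis
    using assms(2) leaf_parents unfolding max_sibling_set_def degree_def by auto
qed

text \<open>
  Regrafting an isolated leaf c as a new child of the vertex P: in the cluster
  representation, c joins exactly the clusters that contain P.
\<close>

definition attach :: "'a set \<Rightarrow> 'a \<Rightarrow> 'a set \<Rightarrow> 'a set" where
  "attach P c A = (if P \<subseteq> A then insert c A else A)"

definition graft :: "'a set set \<Rightarrow> 'a set \<Rightarrow> 'a \<Rightarrow> 'a set set" where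
  "graft F P c = attach P c ` F"

locale sibling_leaves_after_deletion =
  fixes X :: "'a set" and rho :: 'a and G F :: "'a set set" and K :: "('a set \<times> 'a set) set"
    and a b :: 'a and P q :: "'a set"
  assumes G: "is_forest X rho G" and F: "is_forest X rho F"
    and K: "K \<subseteq> edges G" and F_eq: "F = delete_edges G K"
    and a_P: "is_parent F {a} P" and b_P: "is_parent F {b} P" and a_neq_b: "a \<noteq> b"
    and a_q: "is_parent G {a} q" and b_q: "is_parent G {b} q"
begin

lemma laminar_G: "laminar G" "{} \<notin> G"
  using is_forestD[OF G] by simp_all

lemma ab_labels: "a \<in> X" "a \<noteq> rho" "b \<in> X" "b \<noteq> rho"
  using is_parent_singleton_label[OF G] a_q b_q by blast+

lemma mem_F_iff: "A \<in> F \<longleftrightarrow> A \<noteq> {} \<and> (\<exists>V\<in>G. A = cluster_after G K V)"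
  unfolding F_eq delete_edges_def by blast

lemma ab_in_P: "a \<in> P" "b \<in> P"
  using a_P b_P unfolding is_parent_def by auto

lemma reaches_q_if_P_subset:
  assumes "P \<subseteq> cluster_after G K V"
  shows "({a}, q) \<in> K" "({b}, q) \<in> K" "(q, V) \<in> K\<^sup>*"
proof -
  have a: "({a}, V) \<in> K\<^sup>*" and b: "({b}, V) \<in> K\<^sup>*"
    using assms ab_in_P mem_cluster_after_iff[OF G] ab_labels by blast+
  have "{a} \<noteq> V" "{b} \<noteq> V"
    using edges_path_subset[OF K a] edges_path_subset[OF K b] a_neq_b by auto
  then show "({a}, q) \<in> K" "({b}, q) \<in> K" "(q, V) \<in> K\<^sup>*"
    using edges_path_first_step[OF laminar_G K a _ a_q] edges_path_first_step[OF laminar_G K b _ b_q]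
    by auto
qed

lemma cluster_q_eq: "cluster_after G K q = P"
proof -
  have "P \<in> F" using a_P unfolding is_parent_def by simp
  then obtain V where V: "V \<in> G" "P = cluster_after G K V" unfolding mem_F_iff by blast
  then have q: "({a}, q) \<in> K" "({b}, q) \<in> K" "(q, V) \<in> K\<^sup>*"
    using reaches_q_if_P_subset[of V] by simp_all
  have ab: "a \<in> cluster_after G K q" "b \<in> cluster_after G K q"
    using q(1,2) mem_cluster_after_iff[OF G] ab_labels by auto
  then have "{a} \<subset> cluster_after G K q" by (rule singleton_psubset[OF _ _ a_neq_b])
  moreover have "q \<in> G" using a_q unfolding is_parent_def by simp
  then have "cluster_after G K q \<in> F" using ab(1) unfolding mem_F_iff by blast
  moreover have "cluster_after G K q \<subseteq> P" using cluster_after_mono[OF q(3)] V(2) by simp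
  ultimately show ?thesis using a_P unfolding is_parent_def by blast
qed

lemma reaches_q_iff: "(q, V) \<in> K\<^sup>* \<longleftrightarrow> P \<subseteq> cluster_after G K V"
  using cluster_after_mono cluster_q_eq reaches_q_if_P_subset(3) by blast

lemma is_parent_after_deletion:
  assumes s: "is_parent G {s} q" and "s \<in> P"
  shows "is_parent F {s} P"
proof -
  have s_label: "s \<in> X" "s \<noteq> rho" using is_parent_singleton_label[OF G s] by simp_all
  have no_between: "\<not> E \<subset> P" if "E \<in> F" "{s} \<subset> E" for E
  proof -
    obtain W where W: "E = cluster_after G K W" using \<open>E \<in> F\<close> unfolding mem_F_iff by blast
    have "s \<in> E" using that(2) by blast
    then have s_W: "({s}, W) \<in> K\<^sup>*" using W mem_cluster_after_iff[OF G s_label] by simp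
    have "E \<subseteq> W" using W cluster_after_subset[OF K] by simp
    then have "{s} \<noteq> W" using that(2) by auto
    then have "(q, W) \<in> K\<^sup>*" by (rule edges_path_first_step(2)[OF laminar_G K s_W _ s])
    then have "P \<subseteq> E" using reaches_q_iff W by simp
    then show ?thesis by auto
  qed
  have "{s} \<in> F" using is_forestD(4)[OF F s_label] .
  moreover have "P \<in> F" using a_P unfolding is_parent_def by simp
  moreover have "{s} \<subset> P" using \<open>s \<in> P\<close> ab_in_P a_neq_b singleton_psubset by metis
  ultimately show ?thesis unfolding is_parent_def using no_between by metis
qed

context
  fixes c assumes c_q: "is_parent G {c} q" and c_notin_P: "c \<notin> P"
begin

lemma c_label: "c \<in> X" "c \<noteq> rho"
  using is_parent_singleton_label[OF G c_q] by simp_all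

lemma c_edge_deleted: "({c}, q) \<notin> K"
  using c_notin_P cluster_q_eq mem_cluster_after_iff[OF G c_label, of K q] by (metis r_into_rtrancl)

lemma c_isolated:
  assumes "B \<in> F" "c \<in> B"
  shows "B = {c}"
proof -
  obtain W where W: "B = cluster_after G K W" using assms(1) unfolding mem_F_iff by blast
  then have c_W: "({c}, W) \<in> K\<^sup>*" using assms(2) mem_cluster_after_iff[OF G c_label] by simp
  have "{c} = W"
    using edges_path_first_step(1)[OF laminar_G K c_W _ c_q] c_edge_deleted by blast
  then have "B \<subseteq> {c}" using W cluster_after_subset[OF K] by simp
  then show ?thesis using assms(2) by auto
qed

lemma graft_subforest: "subforest (graft F P c) G"
proof -
  have "c \<in> cluster_after G K {c}" using mem_cluster_after_iff[OF G c_label] by simp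
  then have "cluster_after G K {c} = {c}" using cluster_after_subset[OF K, of "{c}"] by auto
  then have "cluster_after G (insert ({c}, q) K) V = attach P c (cluster_after G K V)" for V
    unfolding cluster_after_insert attach_def reaches_q_iff by auto
  then have "delete_edges G (insert ({c}, q) K) = attach P c ` cluster_after G K ` G - {{}}"
    unfolding delete_edges_def image_image by simp
  also have "\<dots> = graft F P c"
  proof -
    have "attach P c A = {} \<longleftrightarrow> A = {}" for A
      using ab_in_P unfolding attach_def by auto
    then show ?thesis unfolding graft_def F_eq delete_edges_def by blast
  qed
  finally have "delete_edges G (insert ({c}, q) K) = graft F P c" .
  moreover have "insert ({c}, q) K \<subseteq> edges G" using K c_q unfolding edges_def by blast
  ultimately show ?thesis unfolding subforest_def by metis
qed

end

lemma subset_if_children_singletons: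
  assumes "children G q = (\<lambda>s. {s}) ` S"
  shows "P \<subseteq> S"
proof
  fix x assume "x \<in> P"
  have "P \<in> F" using a_P unfolding is_parent_def by simp
  then have "x \<in> X" using \<open>x \<in> P\<close> is_forestD(1)[OF F] by blast
  moreover have "x \<noteq> rho"
    using \<open>x \<in> P\<close> parent_of_two_leaves_excludes_root[OF F a_P b_P a_neq_b] by blast
  ultimately have x_q: "({x}, q) \<in> K\<^sup>*"
    using \<open>x \<in> P\<close> cluster_q_eq mem_cluster_after_iff[OF G] by blast
  have "a \<in> q" "b \<in> q" using a_q b_q unfolding is_parent_def by auto
  then have "{x} \<noteq> q" using a_neq_b by auto
  then obtain z where "({x}, z) \<in> K\<^sup>*" "(z, q) \<in> K" using x_q by (meson rtranclE)
  moreover have "z \<in> (\<lambda>s. {s}) ` S"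
    using \<open>(z, q) \<in> K\<close> K assms unfolding children_def edges_def by blast
  ultimately show "x \<in> S" using edges_path_subset[OF K] by blast
qed

lemma max_sibling_set_if_children_singletons:
  assumes children: "children G q = (\<lambda>s. {s}) ` S" and "S \<subseteq> P"
  shows "max_sibling_set F S"
proof -
  have "P = S" using subset_if_children_singletons[OF children] \<open>S \<subseteq> P\<close> by blast
  have S_P: "is_parent F {s} P" if "s \<in> S" for s
    using is_parent_after_deletion that \<open>S \<subseteq> P\<close> children unfolding children_def by blast
  moreover have "children F P = (\<lambda>s. {s}) ` S"
    using children_eq_singletons[OF is_forestD(2)[OF F] S_P[folded \<open>P = S\<close>]] \<open>P = S\<close> by simp
  moreover have "S \<noteq> {}" using ab_in_P \<open>P = S\<close> by blast
  ultimately show ?thesis using max_sibling_setI[OF F] by blast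
qed

end

locale leaf_regraft =
  fixes X :: "'a set" and rho :: 'a and F :: "'a set set" and P :: "'a set" and c :: 'a
  assumes finite_X: "finite X" and F: "is_forest X rho F"
    and c_label: "c \<in> X" "c \<noteq> rho" and c_isolated: "\<And>B. B \<in> F \<Longrightarrow> c \<in> B \<Longrightarrow> B = {c}"
    and P_in_F: "P \<in> F" and root_notin_P: "rho \<notin> P" and P_not_singleton: "\<And>x. \<not> P \<subseteq> {x}"
begin

lemma c_in_F: "{c} \<in> F"
  using is_forestD(4)[OF F c_label] .

lemma c_notin_P: "c \<notin> P"
  using c_isolated[OF P_in_F] P_not_singleton by blast

lemma attach_singleton [simp]: "attach P c {x} = {x}"
  using P_not_singleton unfolding attach_def by simp

lemma subset_attach: "A \<subseteq> attach P c A"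
  and attach_subset_insert: "attach P c A \<subseteq> insert c A"
  and attach_mono: "A \<subseteq> B \<Longrightarrow> attach P c A \<subseteq> attach P c B"
  unfolding attach_def by auto

lemma attach_contains_c: "A \<in> F \<Longrightarrow> c \<in> attach P c A \<Longrightarrow> A = {c} \<or> P \<subseteq> A"
  using c_isolated unfolding attach_def by (auto split: if_splits)

lemma attach_subset_attach_iff:
  assumes "A \<in> F" "B \<in> F" "A \<noteq> {c}"
  shows "attach P c A \<subseteq> attach P c B \<longleftrightarrow> A \<subseteq> B"
proof -
  have "c \<notin> A" using c_isolated assms(1,3) by blast
  then show ?thesis using subset_attach attach_subset_insert attach_mono by blast
qed

lemma attach_eq_singleton: "B \<in> F \<Longrightarrow> attach P c B = {c} \<Longrightarrow> B = {c}"
  using attach_contains_c subset_attach P_not_singleton by (metis insertI1 subset_trans)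

lemma inj_on_attach: "inj_on (attach P c) F"
proof
  fix A B assume AB: "A \<in> F" "B \<in> F" "attach P c A = attach P c B"
  show "A = B"
  proof (cases "A = {c} \<or> B = {c}")
    case True
    then have "attach P c A = {c}" "attach P c B = {c}" using AB(3) attach_singleton by metis+
    then show ?thesis using attach_eq_singleton[OF AB(1)] attach_eq_singleton[OF AB(2)] by simp
  next
    case False
    then show ?thesis using AB attach_subset_attach_iff by (metis subset_antisym subset_refl)
  qed
qed

lemma attach_psubset_attach_iff:
  assumes "A \<in> F" "B \<in> F" "A \<noteq> {c}"
  shows "attach P c A \<subset> attach P c B \<longleftrightarrow> A \<subset> B"
  using attach_subset_attach_iff[OF assms] inj_onD[OF inj_on_attach] assms(1,2) by blast

lemma laminar_graft: "laminar (graft F P c)"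
proof -
  have "attach P c A \<inter> attach P c B = {} \<or> attach P c A \<subseteq> attach P c B \<or> attach P c B \<subseteq> attach P c A"
    if "A \<in> F" "B \<in> F" for A B
  proof -
    have "A \<inter> B = {} \<or> A \<subseteq> B \<or> B \<subseteq> A"
      using bspec[OF bspec[OF is_forestD(3)[OF F, unfolded laminar_def] that(1)] that(2)] .
    then show ?thesis
    proof (elim disjE)
      assume disjoint: "A \<inter> B = {}"
      show ?thesis
      proof (cases "c \<in> attach P c A \<and> c \<in> attach P c B")
        case True
        then have "A = {c} \<or> P \<subseteq> A" "B = {c} \<or> P \<subseteq> B"
          using attach_contains_c that by metis+
        moreover have "\<not> (P \<subseteq> A \<and> P \<subseteq> B)" using disjoint P_not_singleton[of c] by blast
        ultimately have "attach P c A = {c} \<or> attach P c B = {c}" by auto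
        then show ?thesis using True by (metis empty_subsetI insert_subset)
      next
        case False
        then show ?thesis using disjoint attach_subset_insert[of A] attach_subset_insert[of B] by blast
      qed
    qed (simp_all add: attach_mono)
  qed
  then show ?thesis unfolding laminar_def graft_def by blast
qed

lemma root_in_attach_iff: "rho \<in> attach P c A \<longleftrightarrow> rho \<in> A"
  using c_label(2) unfolding attach_def by auto

lemma ex1_root_cluster_graft: "\<exists>!C. C \<in> graft F P c \<and> rho \<in> C"
proof -
  obtain R where R: "R \<in> F" "rho \<in> R" using is_forestD(5)[OF F] by blast
  show ?thesis
  proof (rule ex1I[of _ "attach P c R"])
    show "attach P c R \<in> graft F P c \<and> rho \<in> attach P c R"
      using R root_in_attach_iff unfolding graft_def by simp
    fix C assume "C \<in> graft F P c \<and> rho \<in> C"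
    then obtain A where "A \<in> F" "rho \<in> A" "C = attach P c A"
      unfolding graft_def using root_in_attach_iff by blast
    then show "C = attach P c R" using root_cluster_unique[OF F _ R(1) _ R(2)] by simp
  qed
qed

lemma remove_root_graft:
  assumes "C \<in> graft F P c" "rho \<in> C" "C \<noteq> {rho}"
  shows "C - {rho} \<in> graft F P c"
proof -
  obtain A where A: "A \<in> F" "rho \<in> A" "A \<noteq> {rho}" "C = attach P c A"
    using assms unfolding graft_def using root_in_attach_iff attach_singleton by blast
  then have "A - {rho} \<in> F" using is_forestD(6)[OF F] by simp
  moreover have "C - {rho} = attach P c (A - {rho})"
    using A(2,4) root_notin_P c_label(2) unfolding attach_def by auto
  ultimately show ?thesis unfolding graft_def by simp
qed

lemma graft_is_forest: "is_forest X rho (graft F P c)"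
  unfolding is_forest_def
proof (intro conjI)
  show "graft F P c \<subseteq> Pow X"
    unfolding graft_def
  proof (rule image_subsetI)
    fix A assume "A \<in> F"
    then have "insert c A \<subseteq> X" using is_forestD(1)[OF F] c_label(1) by blast
    then show "attach P c A \<in> Pow X" using attach_subset_insert[of A] subset_trans by blast
  qed
  show "{} \<notin> graft F P c"
  proof
    assume "{} \<in> graft F P c"
    then obtain A where "A \<in> F" "attach P c A = {}" unfolding graft_def by blast
    then show False using is_forestD(2)[OF F] subset_attach[of A] by auto
  qed
  show "\<forall>x\<in>X - {rho}. {x} \<in> graft F P c"
    using is_forestD(4)[OF F] attach_singleton unfolding graft_def by (metis DiffE image_eqI singletonI)
  show "\<exists>!C. C \<in> graft F P c \<and> rho \<in> C" by (rule ex1_root_cluster_graft)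
  show "\<forall>C\<in>graft F P c. rho \<in> C \<and> C \<noteq> {rho} \<longrightarrow> C - {rho} \<in> graft F P c"
    using remove_root_graft by blast
qed (rule laminar_graft)

lemma is_parent_c_graft: "is_parent (graft F P c) {c} (attach P c P)"
proof -
  have "attach P c P = insert c P" unfolding attach_def by simp
  moreover have "{c} \<subset> insert c P" using P_not_singleton[of c] by blast
  moreover have "\<not> attach P c A \<subset> insert c P" if "A \<in> F" "{c} \<subset> attach P c A" for A
  proof -
    have "attach P c A \<noteq> {c}" using that(2) by blast
    then have "P \<subseteq> A" using attach_contains_c[OF that(1)] that(2) by fastforce
    then have "insert c P \<subseteq> attach P c A" unfolding attach_def by auto
    then show ?thesis by blast
  qed
  moreover have "{c} \<in> graft F P c" "attach P c P \<in> graft F P c"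
    using c_in_F P_in_F unfolding graft_def by (metis attach_singleton image_eqI)+
  ultimately show ?thesis unfolding is_parent_def graft_def by auto
qed

abbreviation old_edges :: "('a set \<times> 'a set) set" where
  "old_edges \<equiv> edges (graft F P c) - {({c}, attach P c P)}"

lemma cluster_after_old_edges_subset:
  assumes A: "A \<in> F"
  shows "cluster_after (graft F P c) old_edges (attach P c A) \<subseteq> A"
proof
  have old: "old_edges \<subseteq> edges (graft F P c)" by blast
  fix x
  assume "x \<in> cluster_after (graft F P c) old_edges (attach P c A)"
  then obtain C where C: "leafv (graft F P c) x C" "(C, attach P c A) \<in> old_edges\<^sup>*"
    unfolding cluster_after_def by blast
  have "x \<in> C" using C(1) unfolding leafv_def by simp
  then have "x \<in> attach P c A" using subsetD[OF edges_path_subset[OF old C(2)]] by simp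
  show "x \<in> A"
  proof (cases "x = c")
    case True
    then have "C = {c}" using C(1) leafv_singleton[OF graft_is_forest c_label] leafv_unique by metis
    show ?thesis
    proof (cases "attach P c A = {c}")
      case True
      then show ?thesis using attach_eq_singleton[OF A] \<open>x = c\<close> by simp
    next
      case False
      then have "({c}, attach P c P) \<in> old_edges"
        using edges_path_first_step(1)[OF is_forestD(3,2)[OF graft_is_forest] old _ _ is_parent_c_graft]
          C(2) \<open>C = {c}\<close> by metis
      then show ?thesis by simp
    qed
  next
    case False
    then show ?thesis using \<open>x \<in> attach P c A\<close> attach_subset_insert by blast
  qed
qed

lemma subset_cluster_after_old_edges:
  assumes A: "A \<in> F"
  shows "A \<subseteq> cluster_after (graft F P c) old_edges (attach P c A)"
proof
  have A': "attach P c A \<in> graft F P c" using A unfolding graft_def by simp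
  fix x
  assume "x \<in> A"
  show "x \<in> cluster_after (graft F P c) old_edges (attach P c A)"
  proof (cases "x = c")
    case True
    then have "attach P c A = {c}" using c_isolated[OF A] \<open>x \<in> A\<close> by simp
    then show ?thesis
      using True leafv_singleton[OF graft_is_forest c_label] unfolding cluster_after_def by auto
  next
    case False
    have "x \<in> X" using A \<open>x \<in> A\<close> is_forestD(1)[OF F] by blast
    then obtain C where C: "leafv (graft F P c) x C" using leafv_exists[OF graft_is_forest] by blast
    then have C': "C \<in> graft F P c" "x \<in> C" "C \<subseteq> attach P c A"
      using A' \<open>x \<in> A\<close> subset_attach unfolding leafv_def by blast+
    have "(C, attach P c A) \<in> (edges (graft F P c))\<^sup>*"
      using edges_path_of_subset[OF finite_forest[OF graft_is_forest finite_X] C'(1) A' C'(3)] .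
    then have "(C, attach P c A) \<in> {(D, E) \<in> edges (graft F P c). x \<in> D}\<^sup>*"
      by (rule edges_path_containing[OF _ C'(2)])
    moreover have "{(D, E) \<in> edges (graft F P c). x \<in> D} \<subseteq> old_edges" using False by auto
    ultimately have "(C, attach P c A) \<in> old_edges\<^sup>*" using rtrancl_mono by blast
    then show ?thesis using C unfolding cluster_after_def by blast
  qed
qed

lemma cluster_after_old_edges: "A \<in> F \<Longrightarrow> cluster_after (graft F P c) old_edges (attach P c A) = A"
  using cluster_after_old_edges_subset subset_cluster_after_old_edges by (rule subset_antisym)

lemma subforest_of_graft: "subforest F (graft F P c)"
proof -
  have "delete_edges (graft F P c) old_edges = F"
    using cluster_after_old_edges is_forestD(2)[OF F]
    unfolding delete_edges_def graft_def image_image by simp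
  then show ?thesis unfolding subforest_def by blast
qed

lemma components_graft: "components (graft F P c) = attach P c ` (components F - {{c}})"
proof -
  have c_below: "{c} \<subset> attach P c P" "attach P c P \<in> graft F P c"
    using P_in_F c_notin_P P_not_singleton unfolding attach_def graft_def by auto
  have "attach P c A \<in> components (graft F P c) \<longleftrightarrow> A \<in> components F - {{c}}"
    if "A \<in> F" for A
  proof (cases "A = {c}")
    case True
    then show ?thesis using c_below unfolding components_def by auto
  next
    case False
    then show ?thesis
      using that attach_psubset_attach_iff unfolding components_def graft_def by auto
  qed
  then show ?thesis
    unfolding graft_def components_def by auto
qed

lemma Ord_graft_less: "Ord (graft F P c) < Ord F"
proof -
  have "{c} \<in> components F" using c_in_F c_isolated unfolding components_def by blast
  moreover have "finite (components F)"
    using finite_forest(1)[OF F finite_X] unfolding components_def by simp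
  moreover have "inj_on (attach P c) (components F - {{c}})"
    using inj_on_attach unfolding components_def by (rule inj_on_subset) blast
  ultimately show ?thesis
    unfolding Ord_def components_graft by (metis card_image card_Diff1_less)
qed

end

lemma sibling_set_common_parent:
  assumes H: "is_forest X rho H" and "sibling_set H S" "a \<in> S" "is_parent H {a} q" "s \<in> S"
  shows "is_parent H {s} q"
proof (cases "s = a")
  case False
  then obtain q' where "leaf_parent H a q'" "leaf_parent H s q'"
    using assms(2,3,5) unfolding sibling_set_def siblings_def by metis
  then have "is_parent H {a} q'" "is_parent H {s} q'"
    using leaf_parent_iff_is_parent[OF H] by simp_all
  then show ?thesis using is_parent_unique[OF is_forestD(3,2)[OF H]] assms(4) by metis
qed (use assms(4) in simp)

lemma max_sibling_set_children:
  assumes H: "is_forest X rho H" and "finite X" "max_sibling_set H S"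
  obtains p where "\<And>s. s \<in> S \<Longrightarrow> is_parent H {s} p" "children H p = (\<lambda>s. {s}) ` S"
proof -
  obtain p where p: "\<forall>s\<in>S. leaf_parent H s p"
    and deg: "degree H p = (if has_parent H p then card S + 1 else card S)"
    using assms(3) unfolding max_sibling_set_def by blast
  then have S_p: "is_parent H {s} p" if "s \<in> S" for s
    using leaf_parent_iff_is_parent[OF H] that by blast
  then have sub: "(\<lambda>s. {s}) ` S \<subseteq> children H p" unfolding children_def by blast
  have "children H p \<subseteq> H" unfolding children_def is_parent_def by blast
  then have "finite (children H p)" using finite_forest(1)[OF H assms(2)] by (rule finite_subset)
  moreover have "card (children H p) = card ((\<lambda>s. {s}) ` S)"
    using deg unfolding degree_def by (simp add: card_image split: if_splits)
  ultimately have "children H p = (\<lambda>s. {s}) ` S" using card_subset_eq sub by metis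
  then show ?thesis using that S_p by blast
qed

lemma maximal_agreement_forest_sibling_closed:
  assumes fin: "finite X" and F1: "is_forest X rho F1" and F2: "is_forest X rho F2"
    and maf: "maximal_agreement_forest X rho F1 F2 F"
    and a_P: "is_parent F {a} P" and b_P: "is_parent F {b} P" and "a \<noteq> b"
    and "is_parent F1 {a} q1" "is_parent F1 {b} q1" and c_q1: "is_parent F1 {c} q1"
    and "is_parent F2 {a} q2" "is_parent F2 {b} q2" and c_q2: "is_parent F2 {c} q2"
  shows "c \<in> P"
proof (rule ccontr)
  assume c_notin_P: "c \<notin> P"
  have F: "is_forest X rho F" and "subforest F F1" "subforest F F2"
    using maf unfolding maximal_agreement_forest_def agreement_forest_def by blast+
  then obtain K1 K2 where "K1 \<subseteq> edges F1" "F = delete_edges F1 K1"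
    and "K2 \<subseteq> edges F2" "F = delete_edges F2 K2"
    unfolding subforest_def by blast
  then interpret D1: sibling_leaves_after_deletion X rho F1 F K1 a b P q1
    + D2: sibling_leaves_after_deletion X rho F2 F K2 a b P q2
    using assms F by unfold_locales
  interpret R: leaf_regraft X rho F P c
  proof
    show "c \<in> X" "c \<noteq> rho" using D2.c_label[OF c_q2 c_notin_P] by simp_all
    show "B = {c}" if "B \<in> F" "c \<in> B" for B using D2.c_isolated[OF c_q2 c_notin_P that] .
    show "P \<in> F" using a_P unfolding is_parent_def by simp
    show "rho \<notin> P" using parent_of_two_leaves_excludes_root[OF F a_P b_P \<open>a \<noteq> b\<close>] .
    show "\<not> P \<subseteq> {x}" for x using D2.ab_in_P \<open>a \<noteq> b\<close> by blast
  qed (fact fin F)+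
  have "agreement_forest X rho F1 F2 (graft F P c)"
    unfolding agreement_forest_def
    using R.graft_is_forest D1.graft_subforest[OF c_q1 c_notin_P] D2.graft_subforest[OF c_q2 c_notin_P]
    by blast
  then show False
    using maf R.subforest_of_graft R.Ord_graft_less unfolding maximal_agreement_forest_def by blast
qed

theorem lemma4p5:
  fixes X :: "'a set" and rho :: 'a and F1 F2 F :: "'a set set" and S :: "'a set"
  assumes "finite X" and "rho \<in> X"
    and "is_forest X rho F1" and "is_forest X rho F2"
    and "max_sibling_set F2 S"
    and "sibling_set F1 S"
    and "maximal_agreement_forest X rho F1 F2 F"
    and "\<exists>a\<in>S. \<exists>b\<in>S. a \<noteq> b \<and> siblings F a b"
  shows "max_sibling_set F S"
proof -
  have F: "is_forest X rho F" and "subforest F F2"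
    using assms(7) unfolding maximal_agreement_forest_def agreement_forest_def by blast+
  then obtain K2 where K2: "K2 \<subseteq> edges F2" "F = delete_edges F2 K2" unfolding subforest_def by blast
  obtain p where S_p: "\<And>s. s \<in> S \<Longrightarrow> is_parent F2 {s} p" and children_p: "children F2 p = (\<lambda>s. {s}) ` S"
    using max_sibling_set_children[OF assms(4,1,5)] by blast
  obtain a b P where ab: "a \<in> S" "b \<in> S" "a \<noteq> b" "is_parent F {a} P" "is_parent F {b} P"
    using assms(8) leaf_parent_iff_is_parent[OF F] unfolding siblings_def by metis
  obtain q where "leaf_parent F1 a q"
    using assms(6) ab(1-3) unfolding sibling_set_def siblings_def by metis
  then have S_q: "\<And>s. s \<in> S \<Longrightarrow> is_parent F1 {s} q"
    using sibling_set_common_parent[OF assms(3,6) ab(1)] leaf_parent_iff_is_parent[OF assms(3)] by blast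
  interpret D2: sibling_leaves_after_deletion X rho F2 F K2 a b P p
    using assms(4) F K2 ab S_p by unfold_locales
  have "S \<subseteq> P"
    using maximal_agreement_forest_sibling_closed[OF assms(1,3,4,7) ab(4,5,3)] S_q S_p ab(1,2) by blast
  then show ?thesis by (rule D2.max_sibling_set_if_children_singletons[OF children_p])
qed

end
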